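(* Let $f\colon X\to Y$ be a morphism in a pre-Hilbert $*$-category. The following are equivalent: (i) $f$ is contractive; (ii) $f$ has a jointly epic codilation; (iii) $f$ has a codilation; (iv) $\begin{bmatrix}1 & f^*\\ f & 1\end{bmatrix}\geq 0$ as an endomorphism of $X\oplus Y$.
   Context: A $*$-category is a category with a choice of $f^*\colon Y\to X$ for each $f\colon X\to Y$ such that $1^*=1$, $(gf)^*=f^*g^*$, $(f^* )^*=f$; $f$ is an isometry if $f^*f=1$. A pre-Hilbert $*$-category is a $*$-category with (R1) a zero object, (R2) orthonormal biproducts of all pairs of objects (biproducts $(X,s_1,r_1,s_2,r_2)$ with $r_k=s_k^*$; matrices of morphisms between biproducts are taken with respect to these), (R3) an isometric kernel for every morphism, and (R4) every diagonal $\Delta\colon X\to X\oplus X$ a kernel of some morphism; such a category is additive. For a Hermitian endomorphism $a$ of $A$, $a\geq 0$ means $a=y^*y$ for some $y\colon A\to Y$, and $a\le b$ means $b-a\ge 0$. A morphism $f$ is contractive if $f^*f\leq 1$. A codilation of $f\colon X\to Y$ is a cospan $(T,t_1,t_2)$ with $t_1\colon X\to T$, $t_2\colon Y\to T$ isometries and $t_2^*t_1=f$; it is jointly epic if $ut_1=vt_1$ and $ut_2=vt_2$ imply $u=v$. *)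

theory Defs
  imports Main
begin

text \<open>A category is represented by a type of objects and a type of morphisms,
with domain, codomain, composition (Cmp C g f = g after f, meaningful when
Dom g = Cod f), identities and the involution (star).\<close>

record ('o, 'm) scat =
  Dom :: "'m \<Rightarrow> 'o"
  Cod :: "'m \<Rightarrow> 'o"
  Cmp :: "'m \<Rightarrow> 'm \<Rightarrow> 'm"
  Idt :: "'o \<Rightarrow> 'm"
  Str :: "'m \<Rightarrow> 'm"

definition hom :: "('o, 'm) scat \<Rightarrow> 'm \<Rightarrow> 'o \<Rightarrow> 'o \<Rightarrow> bool" where
  "hom C f X Y \<longleftrightarrow> Dom C f = X \<and> Cod C f = Y"

definition star_category :: "('o, 'm) scat \<Rightarrow> bool" where
  "star_category C \<longleftrightarrow>
     (\<forall>X. Dom C (Idt C X) = X \<and> Cod C (Idt C X) = X) \<and>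
     (\<forall>f g. Dom C g = Cod C f \<longrightarrow>
        Dom C (Cmp C g f) = Dom C f \<and> Cod C (Cmp C g f) = Cod C g) \<and>
     (\<forall>f g h. Dom C g = Cod C f \<and> Dom C h = Cod C g \<longrightarrow>
        Cmp C h (Cmp C g f) = Cmp C (Cmp C h g) f) \<and>
     (\<forall>f. Cmp C f (Idt C (Dom C f)) = f \<and> Cmp C (Idt C (Cod C f)) f = f) \<and>
     (\<forall>f. Dom C (Str C f) = Cod C f \<and> Cod C (Str C f) = Dom C f) \<and>
     (\<forall>X. Str C (Idt C X) = Idt C X) \<and>
     (\<forall>f g. Dom C g = Cod C f \<longrightarrow> Str C (Cmp C g f) = Cmp C (Str C f) (Str C g)) \<and>
     (\<forall>f. Str C (Str C f) = f)"

definition isometry :: "('o, 'm) scat \<Rightarrow> 'm \<Rightarrow> bool" where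
  "isometry C f \<longleftrightarrow> Cmp C (Str C f) f = Idt C (Dom C f)"

definition zero_obj :: "('o, 'm) scat \<Rightarrow> 'o \<Rightarrow> bool" where
  "zero_obj C Z \<longleftrightarrow> (\<forall>X. (\<exists>!f. hom C f Z X) \<and> (\<exists>!f. hom C f X Z))"

definition is_zero :: "('o, 'm) scat \<Rightarrow> 'm \<Rightarrow> bool" where
  "is_zero C f \<longleftrightarrow> (\<exists>Z a b. zero_obj C Z \<and> hom C a (Dom C f) Z \<and> hom C b Z (Cod C f)
                         \<and> f = Cmp C b a)"

definition biproduct :: "('o, 'm) scat \<Rightarrow> 'o \<Rightarrow> 'o \<Rightarrow> 'o \<Rightarrow> 'm \<Rightarrow> 'm \<Rightarrow> 'm \<Rightarrow> 'm \<Rightarrow> bool" where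
  "biproduct C X1 X2 B s1 r1 s2 r2 \<longleftrightarrow>
     hom C s1 X1 B \<and> hom C r1 B X1 \<and> hom C s2 X2 B \<and> hom C r2 B X2 \<and>
     Cmp C r1 s1 = Idt C X1 \<and> Cmp C r2 s2 = Idt C X2 \<and>
     is_zero C (Cmp C r2 s1) \<and> is_zero C (Cmp C r1 s2) \<and>
     (\<forall>T g1 g2. hom C g1 T X1 \<and> hom C g2 T X2 \<longrightarrow>
        (\<exists>!h. hom C h T B \<and> Cmp C r1 h = g1 \<and> Cmp C r2 h = g2)) \<and>
     (\<forall>T g1 g2. hom C g1 X1 T \<and> hom C g2 X2 T \<longrightarrow>
        (\<exists>!h. hom C h B T \<and> Cmp C h s1 = g1 \<and> Cmp C h s2 = g2))"

definition ortho_biproduct :: "('o, 'm) scat \<Rightarrow> 'o \<Rightarrow> 'o \<Rightarrow> 'o \<Rightarrow> 'm \<Rightarrow> 'm \<Rightarrow> 'm \<Rightarrow> 'm \<Rightarrow> bool" where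
  "ortho_biproduct C X1 X2 B s1 r1 s2 r2 \<longleftrightarrow>
     biproduct C X1 X2 B s1 r1 s2 r2 \<and> r1 = Str C s1 \<and> r2 = Str C s2"

definition kernel :: "('o, 'm) scat \<Rightarrow> 'm \<Rightarrow> 'm \<Rightarrow> bool" where
  "kernel C f k \<longleftrightarrow> Cod C k = Dom C f \<and> is_zero C (Cmp C f k) \<and>
     (\<forall>g. Cod C g = Dom C f \<and> is_zero C (Cmp C f g) \<longrightarrow>
        (\<exists>!h. hom C h (Dom C g) (Dom C k) \<and> Cmp C k h = g))"

definition pre_hilbert :: "('o, 'm) scat \<Rightarrow> bool" where
  "pre_hilbert C \<longleftrightarrow> star_category C \<and>
     (\<exists>Z. zero_obj C Z) \<and>
     (\<forall>X Y. \<exists>B s1 r1 s2 r2. ortho_biproduct C X Y B s1 r1 s2 r2) \<and>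
     (\<forall>f. \<exists>k. kernel C f k \<and> isometry C k) \<and>
     (\<forall>X B s1 r1 s2 r2 d. ortho_biproduct C X X B s1 r1 s2 r2 \<and> hom C d X B \<and>
        Cmp C r1 d = Idt C X \<and> Cmp C r2 d = Idt C X \<longrightarrow>
        (\<exists>g. Dom C g = B \<and> kernel C g d))"

text \<open>The (canonical, biproduct-induced) sum of parallel morphisms:
  h = f + g iff h = codiagonal \<circ> pairing(f,g) for some biproduct of Y with Y.\<close>
definition is_sum :: "('o, 'm) scat \<Rightarrow> 'm \<Rightarrow> 'm \<Rightarrow> 'm \<Rightarrow> bool" where
  "is_sum C f g h \<longleftrightarrow> Dom C g = Dom C f \<and> Cod C g = Cod C f \<and>
     (\<exists>B s1 r1 s2 r2 p q. biproduct C (Cod C f) (Cod C f) B s1 r1 s2 r2 \<and>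
        hom C p (Dom C f) B \<and> Cmp C r1 p = f \<and> Cmp C r2 p = g \<and>
        hom C q B (Cod C f) \<and> Cmp C q s1 = Idt C (Cod C f) \<and> Cmp C q s2 = Idt C (Cod C f) \<and>
        h = Cmp C q p)"

definition positive :: "('o, 'm) scat \<Rightarrow> 'm \<Rightarrow> bool" where
  "positive C a \<longleftrightarrow> (\<exists>y. Dom C y = Dom C a \<and> a = Cmp C (Str C y) y)"

text \<open>a \<le> b iff b - a \<ge> 0, i.e. b = a + c for some c \<ge> 0.\<close>
definition leq :: "('o, 'm) scat \<Rightarrow> 'm \<Rightarrow> 'm \<Rightarrow> bool" where
  "leq C a b \<longleftrightarrow> Dom C b = Dom C a \<and> Cod C b = Cod C a \<and>
     (\<exists>c. hom C c (Dom C a) (Cod C a) \<and> positive C c \<and> is_sum C a c b)"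

definition contractive :: "('o, 'm) scat \<Rightarrow> 'm \<Rightarrow> bool" where
  "contractive C f \<longleftrightarrow> leq C (Cmp C (Str C f) f) (Idt C (Dom C f))"

definition codilation :: "('o, 'm) scat \<Rightarrow> 'm \<Rightarrow> 'o \<Rightarrow> 'm \<Rightarrow> 'm \<Rightarrow> bool" where
  "codilation C f T t1 t2 \<longleftrightarrow> hom C t1 (Dom C f) T \<and> hom C t2 (Cod C f) T \<and>
     isometry C t1 \<and> isometry C t2 \<and> Cmp C (Str C t2) t1 = f"

definition jointly_epic :: "('o, 'm) scat \<Rightarrow> 'o \<Rightarrow> 'm \<Rightarrow> 'm \<Rightarrow> bool" where
  "jointly_epic C T t1 t2 \<longleftrightarrow>
     (\<forall>u v. Dom C u = T \<and> Dom C v = T \<and> Cod C u = Cod C v \<and>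
        Cmp C u t1 = Cmp C v t1 \<and> Cmp C u t2 = Cmp C v t2 \<longrightarrow> u = v)"

text \<open>Condition (iv): the matrix [[1, f*],[f, 1]] w.r.t. an orthonormal biproduct
  X \<oplus> Y (entry (i,j) = r_i m s_j) is positive.\<close>
definition block_matrix_positive :: "('o, 'm) scat \<Rightarrow> 'm \<Rightarrow> bool" where
  "block_matrix_positive C f \<longleftrightarrow>
     (\<forall>B s1 r1 s2 r2 m. ortho_biproduct C (Dom C f) (Cod C f) B s1 r1 s2 r2 \<and> hom C m B B \<and>
        Cmp C r1 (Cmp C m s1) = Idt C (Dom C f) \<and> Cmp C r1 (Cmp C m s2) = Str C f \<and>
        Cmp C r2 (Cmp C m s1) = f \<and> Cmp C r2 (Cmp C m s2) = Idt C (Cod C f) \<longrightarrow>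
        positive C m)"

end

theory Submission
  imports Defs
begin

text \<open>Hom-sets of a pre-Hilbert \<open>*\<close>-category are abelian groups: \<open>f + g\<close> is the codiagonal after
  \<open>\<langle>f, g\<rangle>\<close>, and an additive inverse of \<open>1\<^sub>X\<close> is read off an isometric kernel \<open>k\<close> of the codiagonal of
  \<open>X \<oplus> X\<close>, using that the diagonal is itself a kernel (R4). All four conditions then express the
  existence of a defect \<open>y\<close> with \<open>f\<^sup>* f + y\<^sup>* y = 1\<close>.
  (i)\<open>\<Rightarrow>\<close>(iv): the block matrix is \<open>w\<^sup>* w\<close> for \<open>w = [\<langle>f, y\<rangle>, \<iota>\<^sub>1] : X \<oplus> Y \<rightarrow> Y \<oplus> Z\<close>.
  (iv)\<open>\<Rightarrow>\<close>(iii): writing the block matrix as \<open>y\<^sup>* y\<close>, the restrictions of \<open>y\<close> to the two summands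
  form a codilation.
  (iii)\<open>\<Rightarrow>\<close>(i): \<open>y = (1 - t\<^sub>2 t\<^sub>2\<^sup>*) t\<^sub>1\<close> works because \<open>1 - t\<^sub>2 t\<^sub>2\<^sup>*\<close> is a projection.
  (iii)\<open>\<Rightarrow>\<close>(ii): corestricting \<open>[t\<^sub>1, t\<^sub>2]\<close> to its image (the kernel of its cokernel) gives an
  epimorphism, hence a jointly epic codilation.\<close>

locale pre_hilbert_cat =
  fixes C :: "('o, 'm) scat"
  assumes pre_hilbert_C: "pre_hilbert C"
begin

abbreviation src where "src f \<equiv> Dom C f"
abbreviation tgt where "tgt f \<equiv> Cod C f"
abbreviation comp (infixr "\<cdot>" 70) where "g \<cdot> f \<equiv> Cmp C g f"
abbreviation adj ("_\<^sup>\<star>" [1000] 1000) where "f\<^sup>\<star> \<equiv> Str C f"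
abbreviation idt where "idt X \<equiv> Idt C X"

lemma star_category: "star_category C"
  using pre_hilbert_C unfolding pre_hilbert_def by auto

lemma src_idt [simp]: "src (idt X) = X" and tgt_idt [simp]: "tgt (idt X) = X"
  using star_category unfolding star_category_def by auto

lemma src_comp [simp]: "src g = tgt f \<Longrightarrow> src (g \<cdot> f) = src f"
  and tgt_comp [simp]: "src g = tgt f \<Longrightarrow> tgt (g \<cdot> f) = tgt g"
  using star_category unfolding star_category_def by auto

lemma comp_assoc: "src g = tgt f \<Longrightarrow> src h = tgt g \<Longrightarrow> (h \<cdot> g) \<cdot> f = h \<cdot> (g \<cdot> f)"
  using star_category unfolding star_category_def by metis

lemma comp_idt_right [simp]: "X = src f \<Longrightarrow> f \<cdot> idt X = f"
  and comp_idt_left [simp]: "Y = tgt f \<Longrightarrow> idt Y \<cdot> f = f"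
  using star_category unfolding star_category_def by auto

lemma src_adj [simp]: "src (f\<^sup>\<star>) = tgt f" and tgt_adj [simp]: "tgt (f\<^sup>\<star>) = src f"
  using star_category unfolding star_category_def by auto

lemma adj_idt [simp]: "(idt X)\<^sup>\<star> = idt X"
  and adj_adj [simp]: "f\<^sup>\<star>\<^sup>\<star> = f"
  using star_category unfolding star_category_def by auto

lemma adj_comp: "src g = tgt f \<Longrightarrow> (g \<cdot> f)\<^sup>\<star> = f\<^sup>\<star> \<cdot> g\<^sup>\<star>"
  using star_category unfolding star_category_def by auto

lemma adj_comp_comp:
  assumes "tgt s = src y" "tgt s' = src y"
  shows "(y \<cdot> s)\<^sup>\<star> \<cdot> (y \<cdot> s') = s\<^sup>\<star> \<cdot> (y\<^sup>\<star> \<cdot> y) \<cdot> s'"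
  using assms adj_comp[of y s] by (simp add: comp_assoc)

lemma comp_reassoc: "a \<cdot> b = c \<Longrightarrow> src a = tgt b \<Longrightarrow> src b = tgt x \<Longrightarrow> a \<cdot> (b \<cdot> x) = c \<cdot> x"
  by (metis comp_assoc)

subsection \<open>Zero morphisms\<close>

definition zobj where "zobj = (SOME Z. zero_obj C Z)"

lemma zero_obj_zobj: "zero_obj C zobj"
  using pre_hilbert_C unfolding pre_hilbert_def zobj_def by (metis someI_ex)

definition to_zero where "to_zero X = (THE a. hom C a X zobj)"
definition from_zero where "from_zero Y = (THE b. hom C b zobj Y)"
definition zero where "zero X Y = from_zero Y \<cdot> to_zero X"

lemma to_zero: "src (to_zero X) = X" "tgt (to_zero X) = zobj"
  and to_zero_unique: "src a = X \<Longrightarrow> tgt a = zobj \<Longrightarrow> a = to_zero X"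
proof -
  have "\<exists>!a. hom C a X zobj" using zero_obj_zobj unfolding zero_obj_def by auto
  moreover from this have "hom C (to_zero X) X zobj" unfolding to_zero_def by (rule theI')
  ultimately show "src (to_zero X) = X" "tgt (to_zero X) = zobj"
    and "src a = X \<Longrightarrow> tgt a = zobj \<Longrightarrow> a = to_zero X"
    unfolding hom_def by auto
qed

lemma from_zero: "src (from_zero Y) = zobj" "tgt (from_zero Y) = Y"
  and from_zero_unique: "src b = zobj \<Longrightarrow> tgt b = Y \<Longrightarrow> b = from_zero Y"
proof -
  have "\<exists>!b. hom C b zobj Y" using zero_obj_zobj unfolding zero_obj_def by auto
  moreover from this have "hom C (from_zero Y) zobj Y" unfolding from_zero_def by (rule theI')
  ultimately show "src (from_zero Y) = zobj" "tgt (from_zero Y) = Y"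
    and "src b = zobj \<Longrightarrow> tgt b = Y \<Longrightarrow> b = from_zero Y"
    unfolding hom_def by auto
qed

lemma src_zero [simp]: "src (zero X Y) = X" and tgt_zero [simp]: "tgt (zero X Y) = Y"
  unfolding zero_def using to_zero from_zero by auto

lemma is_zero_iff: "is_zero C f \<longleftrightarrow> f = zero (src f) (tgt f)"
proof
  assume "is_zero C f"
  then obtain Z a b where Z: "zero_obj C Z" and a: "hom C a (src f) Z" and b: "hom C b Z (tgt f)"
    and f: "f = b \<cdot> a" unfolding is_zero_def by blast
  obtain \<phi> \<psi> where \<phi>: "hom C \<phi> zobj Z" and \<psi>: "hom C \<psi> Z zobj"
    using Z unfolding zero_obj_def by blast
  have a_eq: "a = \<phi> \<cdot> to_zero (src f)"
    using Z a \<phi> to_zero unfolding zero_obj_def hom_def by (metis src_comp tgt_comp)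
  have b_eq: "b = from_zero (tgt f) \<cdot> \<psi>"
    using Z b \<psi> from_zero unfolding zero_obj_def hom_def by (metis src_comp tgt_comp)
  have "\<psi> \<cdot> \<phi> = idt zobj"
    using zero_obj_zobj \<phi> \<psi> unfolding zero_obj_def hom_def by (metis src_comp tgt_comp src_idt tgt_idt)
  have "f = (from_zero (tgt f) \<cdot> \<psi>) \<cdot> (\<phi> \<cdot> to_zero (src f))"
    using f a_eq b_eq by metis
  also have "\<dots> = from_zero (tgt f) \<cdot> ((\<psi> \<cdot> \<phi>) \<cdot> to_zero (src f))"
    using \<phi> \<psi> to_zero from_zero unfolding hom_def by (simp add: comp_assoc)
  finally have "f = from_zero (tgt f) \<cdot> ((\<psi> \<cdot> \<phi>) \<cdot> to_zero (src f))" .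
  then show "f = zero (src f) (tgt f)"
    using \<open>\<psi> \<cdot> \<phi> = idt zobj\<close> to_zero unfolding zero_def by simp
next
  assume "f = zero (src f) (tgt f)"
  then show "is_zero C f"
    unfolding is_zero_def zero_def using zero_obj_zobj to_zero from_zero unfolding hom_def by metis
qed

lemma zero_comp [simp]: "tgt f = X \<Longrightarrow> zero X Y \<cdot> f = zero (src f) Y"
proof -
  assume "tgt f = X"
  moreover from this have "to_zero X \<cdot> f = to_zero (src f)" using to_zero by (intro to_zero_unique) auto
  ultimately show ?thesis unfolding zero_def using to_zero from_zero by (simp add: comp_assoc)
qed

lemma comp_zero [simp]: "src g = Y \<Longrightarrow> g \<cdot> zero X Y = zero X (tgt g)"
proof -
  assume "src g = Y"
  moreover from this have "g \<cdot> from_zero Y = from_zero (tgt g)" using from_zero by (intro from_zero_unique) auto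
  ultimately show ?thesis unfolding zero_def using to_zero from_zero by (simp add: comp_assoc[symmetric])
qed

lemma adj_zero [simp]: "(zero X Y)\<^sup>\<star> = zero Y X"
proof -
  have "(to_zero X)\<^sup>\<star> = from_zero X" using to_zero by (intro from_zero_unique) auto
  moreover have "(from_zero Y)\<^sup>\<star> = to_zero Y" using from_zero by (intro to_zero_unique) auto
  ultimately show ?thesis unfolding zero_def using to_zero from_zero by (simp add: adj_comp)
qed


subsection \<open>Biproducts\<close>

lemma biproductD:
  assumes "biproduct C X1 X2 B s1 r1 s2 r2"
  shows "src s1 = X1" "tgt s1 = B" "src r1 = B" "tgt r1 = X1"
    "src s2 = X2" "tgt s2 = B" "src r2 = B" "tgt r2 = X2"
    "r1 \<cdot> s1 = idt X1" "r2 \<cdot> s2 = idt X2" "r2 \<cdot> s1 = zero X1 X2" "r1 \<cdot> s2 = zero X2 X1"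
proof -
  show "src s1 = X1" "tgt s1 = B" "src r1 = B" "tgt r1 = X1"
    "src s2 = X2" "tgt s2 = B" "src r2 = B" "tgt r2 = X2"
    "r1 \<cdot> s1 = idt X1" "r2 \<cdot> s2 = idt X2"
    using assms unfolding biproduct_def hom_def by auto
  then show "r2 \<cdot> s1 = zero X1 X2" "r1 \<cdot> s2 = zero X2 X1"
    using assms unfolding biproduct_def is_zero_iff by auto
qed

lemma biproduct_swap: "biproduct C X1 X2 B s1 r1 s2 r2 \<Longrightarrow> biproduct C X2 X1 B s2 r2 s1 r1"
  unfolding biproduct_def by blast

definition pairing where
  "pairing B r1 r2 g1 g2 = (THE h. hom C h (src g1) B \<and> r1 \<cdot> h = g1 \<and> r2 \<cdot> h = g2)"

definition copairing where
  "copairing B s1 s2 g1 g2 = (THE h. hom C h B (tgt g1) \<and> h \<cdot> s1 = g1 \<and> h \<cdot> s2 = g2)"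

lemma pairing:
  assumes B: "biproduct C X1 X2 B s1 r1 s2 r2" and "tgt g1 = X1" "tgt g2 = X2" "src g2 = src g1"
  shows "src (pairing B r1 r2 g1 g2) = src g1" "tgt (pairing B r1 r2 g1 g2) = B"
    "r1 \<cdot> pairing B r1 r2 g1 g2 = g1" "r2 \<cdot> pairing B r1 r2 g1 g2 = g2"
proof -
  have "\<exists>!h. hom C h (src g1) B \<and> r1 \<cdot> h = g1 \<and> r2 \<cdot> h = g2"
    using assms unfolding biproduct_def hom_def by auto
  then have "hom C (pairing B r1 r2 g1 g2) (src g1) B \<and>
      r1 \<cdot> pairing B r1 r2 g1 g2 = g1 \<and> r2 \<cdot> pairing B r1 r2 g1 g2 = g2"
    unfolding pairing_def by (rule theI')
  then show "src (pairing B r1 r2 g1 g2) = src g1" "tgt (pairing B r1 r2 g1 g2) = B"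
    "r1 \<cdot> pairing B r1 r2 g1 g2 = g1" "r2 \<cdot> pairing B r1 r2 g1 g2 = g2"
    unfolding hom_def by auto
qed

lemma pairing_eta:
  assumes B: "biproduct C X1 X2 B s1 r1 s2 r2" and "tgt h = B"
  shows "h = pairing B r1 r2 (r1 \<cdot> h) (r2 \<cdot> h)"
proof -
  have universal: "\<forall>T g1 g2. hom C g1 T X1 \<and> hom C g2 T X2 \<longrightarrow>
      (\<exists>!h. hom C h T B \<and> r1 \<cdot> h = g1 \<and> r2 \<cdot> h = g2)"
    using B unfolding biproduct_def by blast
  have "\<exists>!h'. hom C h' (src (r1 \<cdot> h)) B \<and> r1 \<cdot> h' = r1 \<cdot> h \<and> r2 \<cdot> h' = r2 \<cdot> h"
    by (rule universal[rule_format]) (use assms biproductD[OF B] in \<open>auto simp: hom_def\<close>)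
  moreover have "hom C h (src (r1 \<cdot> h)) B" using assms biproductD[OF B] unfolding hom_def by simp
  ultimately show ?thesis unfolding pairing_def by (metis (mono_tags, lifting) the_equality)
qed

lemma biproduct_jointly_monic:
  assumes B: "biproduct C X1 X2 B s1 r1 s2 r2" and "tgt h = B" "tgt h' = B"
    and "r1 \<cdot> h = r1 \<cdot> h'" "r2 \<cdot> h = r2 \<cdot> h'"
  shows "h = h'"
  using pairing_eta[OF B] assms by metis

lemma copairing:
  assumes B: "biproduct C X1 X2 B s1 r1 s2 r2" and "src g1 = X1" "src g2 = X2" "tgt g2 = tgt g1"
  shows "src (copairing B s1 s2 g1 g2) = B" "tgt (copairing B s1 s2 g1 g2) = tgt g1"
    "copairing B s1 s2 g1 g2 \<cdot> s1 = g1" "copairing B s1 s2 g1 g2 \<cdot> s2 = g2"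
proof -
  have "\<exists>!h. hom C h B (tgt g1) \<and> h \<cdot> s1 = g1 \<and> h \<cdot> s2 = g2"
    using assms unfolding biproduct_def hom_def by auto
  then have "hom C (copairing B s1 s2 g1 g2) B (tgt g1) \<and>
      copairing B s1 s2 g1 g2 \<cdot> s1 = g1 \<and> copairing B s1 s2 g1 g2 \<cdot> s2 = g2"
    unfolding copairing_def by (rule theI')
  then show "src (copairing B s1 s2 g1 g2) = B" "tgt (copairing B s1 s2 g1 g2) = tgt g1"
    "copairing B s1 s2 g1 g2 \<cdot> s1 = g1" "copairing B s1 s2 g1 g2 \<cdot> s2 = g2"
    unfolding hom_def by auto
qed

lemma copairing_eta:
  assumes B: "biproduct C X1 X2 B s1 r1 s2 r2" and "src h = B"
  shows "h = copairing B s1 s2 (h \<cdot> s1) (h \<cdot> s2)"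
proof -
  have universal: "\<forall>T g1 g2. hom C g1 X1 T \<and> hom C g2 X2 T \<longrightarrow>
      (\<exists>!h. hom C h B T \<and> h \<cdot> s1 = g1 \<and> h \<cdot> s2 = g2)"
    using B unfolding biproduct_def by blast
  have "\<exists>!h'. hom C h' B (tgt (h \<cdot> s1)) \<and> h' \<cdot> s1 = h \<cdot> s1 \<and> h' \<cdot> s2 = h \<cdot> s2"
    by (rule universal[rule_format]) (use assms biproductD[OF B] in \<open>auto simp: hom_def\<close>)
  moreover have "hom C h B (tgt (h \<cdot> s1))" using assms biproductD[OF B] unfolding hom_def by simp
  ultimately show ?thesis unfolding copairing_def by (metis (mono_tags, lifting) the_equality)
qed

lemma biproduct_jointly_epic:
  assumes B: "biproduct C X1 X2 B s1 r1 s2 r2" and "src h = B" "src h' = B"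
    and "h \<cdot> s1 = h' \<cdot> s1" "h \<cdot> s2 = h' \<cdot> s2"
  shows "h = h'"
  using copairing_eta[OF B] assms by metis

lemma biproduct_matrix_ext:
  assumes B: "biproduct C X1 X2 B s1 r1 s2 r2"
    and "src u = B" "tgt u = B" "src v = B" "tgt v = B"
    and "r1 \<cdot> u \<cdot> s1 = r1 \<cdot> v \<cdot> s1" "r1 \<cdot> u \<cdot> s2 = r1 \<cdot> v \<cdot> s2"
    and "r2 \<cdot> u \<cdot> s1 = r2 \<cdot> v \<cdot> s1" "r2 \<cdot> u \<cdot> s2 = r2 \<cdot> v \<cdot> s2"
  shows "u = v"
proof (rule biproduct_jointly_epic[OF B])
  show "u \<cdot> s1 = v \<cdot> s1" "u \<cdot> s2 = v \<cdot> s2"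
    by (rule biproduct_jointly_monic[OF B]; use assms biproductD[OF B] in simp)+
qed (use assms in auto)

lemma pairing_swap: "src g2 = src g1 \<Longrightarrow> pairing B r2 r1 g2 g1 = pairing B r1 r2 g1 g2"
  unfolding pairing_def by metis

lemma copairing_swap: "tgt g2 = tgt g1 \<Longrightarrow> copairing B s2 s1 g2 g1 = copairing B s1 s2 g1 g2"
  unfolding copairing_def by metis

lemma pairing_proj_comp_inj:
  assumes B: "biproduct C Y1 Y2 B s1 r1 s2 r2" and B': "biproduct C X1 X2 B' s1' r1' s2' r2'"
    and f: "src f = X1" "tgt f = Y1" and g: "src g = X2" "tgt g = Y2"
  shows "pairing B r1 r2 (f \<cdot> r1') (g \<cdot> r2') \<cdot> s1' = s1 \<cdot> f"
    and "pairing B r1 r2 (f \<cdot> r1') (g \<cdot> r2') \<cdot> s2' = s2 \<cdot> g"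
proof -
  note b = biproductD[OF B] and b' = biproductD[OF B']
  note M = pairing[OF B, of "f \<cdot> r1'" "g \<cdot> r2'"]
  show "pairing B r1 r2 (f \<cdot> r1') (g \<cdot> r2') \<cdot> s1' = s1 \<cdot> f"
    by (rule biproduct_jointly_monic[OF B]) (use b b' f g M in
      \<open>simp_all add: comp_assoc comp_reassoc[OF M(3)] comp_reassoc[OF M(4)]
        comp_reassoc[OF b(9)] comp_reassoc[OF b(11)]\<close>)
  show "pairing B r1 r2 (f \<cdot> r1') (g \<cdot> r2') \<cdot> s2' = s2 \<cdot> g"
    by (rule biproduct_jointly_monic[OF B]) (use b b' f g M in
      \<open>simp_all add: comp_assoc comp_reassoc[OF M(3)] comp_reassoc[OF M(4)]
        comp_reassoc[OF b(10)] comp_reassoc[OF b(12)]\<close>)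
qed

text \<open>Both sides equal \<open>q \<cdot> M \<cdot> d\<close>, where \<open>M : B' \<rightarrow> B\<close> is the morphism \<open>f \<oplus> g\<close>.\<close>
lemma codiagonal_sum_eq_diagonal_sum:
  assumes B: "biproduct C Y Y B s1 r1 s2 r2" and B': "biproduct C X X B' s1' r1' s2' r2'"
    and f: "src f = X" "tgt f = Y" and g: "src g = X" "tgt g = Y"
  shows "copairing B s1 s2 (idt Y) (idt Y) \<cdot> pairing B r1 r2 f g
       = copairing B' s1' s2' f g \<cdot> pairing B' r1' r2' (idt X) (idt X)"
proof -
  note b = biproductD[OF B] and b' = biproductD[OF B']
  define q where "q = copairing B s1 s2 (idt Y) (idt Y)"
  define d where "d = pairing B' r1' r2' (idt X) (idt X)"
  define M where "M = pairing B r1 r2 (f \<cdot> r1') (g \<cdot> r2')"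
  have q: "src q = B" "tgt q = Y" "q \<cdot> s1 = idt Y" "q \<cdot> s2 = idt Y"
    using copairing[OF B, of "idt Y" "idt Y"] b unfolding q_def by auto
  have d: "src d = X" "tgt d = B'" "r1' \<cdot> d = idt X" "r2' \<cdot> d = idt X"
    using pairing[OF B', of "idt X" "idt X"] unfolding d_def by auto
  have M: "src M = B'" "tgt M = B" "r1 \<cdot> M = f \<cdot> r1'" "r2 \<cdot> M = g \<cdot> r2'"
    using pairing[OF B, of "f \<cdot> r1'" "g \<cdot> r2'"] f g b' unfolding M_def by auto
  note Mi = pairing_proj_comp_inj[OF B B' f g, folded M_def]
  note m = copairing[OF B', of f g] and p = pairing[OF B, of f g]
  have "q \<cdot> M = copairing B' s1' s2' f g"
    by (rule biproduct_jointly_epic[OF B']) (use b b' f g M q m Mi in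
      \<open>simp_all add: comp_assoc comp_reassoc[OF q(3)] comp_reassoc[OF q(4)]\<close>)
  moreover have "M \<cdot> d = pairing B r1 r2 f g"
    by (rule biproduct_jointly_monic[OF B]) (use b b' f g M d p in
      \<open>simp_all add: comp_assoc comp_reassoc[OF M(3)] comp_reassoc[OF M(4)]\<close>)
  ultimately show ?thesis
    using M q d unfolding q_def[symmetric] d_def[symmetric] by (metis comp_assoc)
qed

definition osum_data where
  "osum_data X Y = (SOME (B, s1, s2). ortho_biproduct C X Y B s1 (s1\<^sup>\<star>) s2 (s2\<^sup>\<star>))"

definition osum where "osum X Y = fst (osum_data X Y)"
definition in1 where "in1 X Y = fst (snd (osum_data X Y))"
definition in2 where "in2 X Y = snd (snd (osum_data X Y))"

lemma ortho_biproduct_osum: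
  "ortho_biproduct C X Y (osum X Y) (in1 X Y) (in1 X Y)\<^sup>\<star> (in2 X Y) (in2 X Y)\<^sup>\<star>"
proof -
  obtain B s1 r1 s2 r2 where "ortho_biproduct C X Y B s1 r1 s2 r2"
    using pre_hilbert_C unfolding pre_hilbert_def by blast
  then have "ortho_biproduct C X Y B s1 (s1\<^sup>\<star>) s2 (s2\<^sup>\<star>)"
    unfolding ortho_biproduct_def by auto
  then have "\<exists>p. (\<lambda>(B, s1, s2). ortho_biproduct C X Y B s1 (s1\<^sup>\<star>) s2 (s2\<^sup>\<star>)) p"
    by auto
  then have "(\<lambda>(B, s1, s2). ortho_biproduct C X Y B s1 (s1\<^sup>\<star>) s2 (s2\<^sup>\<star>)) (osum_data X Y)"
    unfolding osum_data_def by (rule someI_ex)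
  then show ?thesis unfolding osum_def in1_def in2_def by (auto split: prod.splits)
qed

lemma biproduct_osum:
  "biproduct C X Y (osum X Y) (in1 X Y) (in1 X Y)\<^sup>\<star> (in2 X Y) (in2 X Y)\<^sup>\<star>"
  using ortho_biproduct_osum unfolding ortho_biproduct_def by auto

lemmas osum_simps [simp] = biproductD[OF biproduct_osum]

definition pair where
  "pair f g = pairing (osum (tgt f) (tgt g)) (in1 (tgt f) (tgt g))\<^sup>\<star> (in2 (tgt f) (tgt g))\<^sup>\<star> f g"

definition copair where
  "copair f g = copairing (osum (src f) (src g)) (in1 (src f) (src g)) (in2 (src f) (src g)) f g"

lemma pair [simp]:
  assumes "src g = src f" "tgt f = Y1" "tgt g = Y2"
  shows "src (pair f g) = src f" "tgt (pair f g) = osum Y1 Y2"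
    "(in1 Y1 Y2)\<^sup>\<star> \<cdot> pair f g = f" "(in2 Y1 Y2)\<^sup>\<star> \<cdot> pair f g = g"
  using pairing[OF biproduct_osum] assms unfolding pair_def by auto

lemma pair_eta:
  assumes "tgt h = osum Y1 Y2"
  shows "h = pair ((in1 Y1 Y2)\<^sup>\<star> \<cdot> h) ((in2 Y1 Y2)\<^sup>\<star> \<cdot> h)"
proof -
  have "tgt ((in1 Y1 Y2)\<^sup>\<star> \<cdot> h) = Y1" "tgt ((in2 Y1 Y2)\<^sup>\<star> \<cdot> h) = Y2"
    using assms by simp_all
  then show ?thesis unfolding pair_def by (simp only:) (rule pairing_eta[OF biproduct_osum assms])
qed

lemma copair [simp]:
  assumes "tgt g = tgt f" "src f = X1" "src g = X2"
  shows "src (copair f g) = osum X1 X2" "tgt (copair f g) = tgt f"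
    "copair f g \<cdot> in1 X1 X2 = f" "copair f g \<cdot> in2 X1 X2 = g"
  using copairing[OF biproduct_osum] assms unfolding copair_def by auto

lemma copair_eta:
  assumes "src h = osum X1 X2"
  shows "h = copair (h \<cdot> in1 X1 X2) (h \<cdot> in2 X1 X2)"
proof -
  have "src (h \<cdot> in1 X1 X2) = X1" "src (h \<cdot> in2 X1 X2) = X2"
    using assms by simp_all
  then show ?thesis unfolding copair_def by (simp only:) (rule copairing_eta[OF biproduct_osum assms])
qed

lemma adj_pair:
  assumes "src g = src f"
  shows "(pair f g)\<^sup>\<star> = copair (f\<^sup>\<star>) (g\<^sup>\<star>)"
proof -
  have "(pair f g)\<^sup>\<star> =
      copair ((pair f g)\<^sup>\<star> \<cdot> in1 (tgt f) (tgt g)) ((pair f g)\<^sup>\<star> \<cdot> in2 (tgt f) (tgt g))"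
    by (rule copair_eta) (use assms in simp)
  also have "(pair f g)\<^sup>\<star> \<cdot> in1 (tgt f) (tgt g) = f\<^sup>\<star>"
    using adj_comp[of "(in1 (tgt f) (tgt g))\<^sup>\<star>" "pair f g"] assms by simp
  also have "(pair f g)\<^sup>\<star> \<cdot> in2 (tgt f) (tgt g) = g\<^sup>\<star>"
    using adj_comp[of "(in2 (tgt f) (tgt g))\<^sup>\<star>" "pair f g"] assms by simp
  finally show ?thesis .
qed

definition diag where "diag X = pair (idt X) (idt X)"
definition codiag where "codiag X = copair (idt X) (idt X)"

lemma adj_diag: "(diag X)\<^sup>\<star> = codiag X"
  unfolding diag_def codiag_def by (simp add: adj_pair)

lemma diag [simp]:
  "src (diag X) = X" "tgt (diag X) = osum X X"
  "(in1 X X)\<^sup>\<star> \<cdot> diag X = idt X" "(in2 X X)\<^sup>\<star> \<cdot> diag X = idt X"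
  unfolding diag_def by simp_all

lemma codiag [simp]:
  "src (codiag Y) = osum Y Y" "tgt (codiag Y) = Y"
  "codiag Y \<cdot> in1 Y Y = idt Y" "codiag Y \<cdot> in2 Y Y = idt Y"
  unfolding codiag_def by simp_all


subsection \<open>Addition of parallel morphisms\<close>

definition add (infixl "\<^bold>+" 65) where "f \<^bold>+ g = codiag (tgt f) \<cdot> pair f g"

lemma src_add [simp]: "src g = src f \<Longrightarrow> tgt g = tgt f \<Longrightarrow> src (f \<^bold>+ g) = src f"
  and tgt_add [simp]: "src g = src f \<Longrightarrow> tgt g = tgt f \<Longrightarrow> tgt (f \<^bold>+ g) = tgt f"
  unfolding add_def by simp_all

lemma add_via_diagonal:
  assumes B: "biproduct C X X B s1 r1 s2 r2"
    and "src f = X" "src g = X" "tgt g = tgt f"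
  shows "f \<^bold>+ g = copairing B s1 s2 f g \<cdot> pairing B r1 r2 (idt X) (idt X)"
  using codiagonal_sum_eq_diagonal_sum[OF biproduct_osum B, where f = f and g = g] assms
  unfolding add_def codiag_def copair_def pair_def by simp

lemma add_via_codiagonal:
  assumes B: "biproduct C Y Y B s1 r1 s2 r2"
    and "tgt f = Y" "src g = src f" "tgt g = Y"
  shows "f \<^bold>+ g = copairing B s1 s2 (idt Y) (idt Y) \<cdot> pairing B r1 r2 f g"
  using add_via_diagonal[OF biproduct_osum, of f "src f" g]
    codiagonal_sum_eq_diagonal_sum[OF B biproduct_osum, where f = f and g = g] assms
  by simp

lemma add_eq_copair_diag: "src g = src f \<Longrightarrow> tgt g = tgt f \<Longrightarrow> f \<^bold>+ g = copair f g \<cdot> diag (src f)"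
  using add_via_diagonal[OF biproduct_osum, of f "src f" g] unfolding copair_def diag_def pair_def
  by simp

lemma is_sum_iff: "is_sum C f g h \<longleftrightarrow> src g = src f \<and> tgt g = tgt f \<and> h = f \<^bold>+ g"
proof
  assume "is_sum C f g h"
  then obtain B s1 r1 s2 r2 p q where g: "src g = src f" "tgt g = tgt f"
    and B: "biproduct C (tgt f) (tgt f) B s1 r1 s2 r2"
    and p: "hom C p (src f) B" "r1 \<cdot> p = f" "r2 \<cdot> p = g"
    and q: "hom C q B (tgt f)" "q \<cdot> s1 = idt (tgt f)" "q \<cdot> s2 = idt (tgt f)"
    and h: "h = q \<cdot> p"
    unfolding is_sum_def by blast
  have "p = pairing B r1 r2 f g" using pairing_eta[OF B, of p] p unfolding hom_def by auto
  moreover have "q = copairing B s1 s2 (idt (tgt f)) (idt (tgt f))"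
    using copairing_eta[OF B, of q] q unfolding hom_def by auto
  ultimately show "src g = src f \<and> tgt g = tgt f \<and> h = f \<^bold>+ g"
    using add_via_codiagonal[OF B] g h by auto
next
  let ?Y = "tgt f"
  assume "src g = src f \<and> tgt g = tgt f \<and> h = f \<^bold>+ g"
  then have "src g = src f" "tgt g = ?Y" "h = codiag ?Y \<cdot> pair f g"
    unfolding add_def by auto
  moreover note biproduct_osum[of ?Y ?Y]
  moreover have "hom C (pair f g) (src f) (osum ?Y ?Y)" "hom C (codiag ?Y) (osum ?Y ?Y) ?Y"
    unfolding hom_def using \<open>src g = src f\<close> \<open>tgt g = ?Y\<close> by simp_all
  ultimately show "is_sum C f g h"
    unfolding is_sum_def by (metis pair(3,4) codiag(3,4))
qed

lemma pair_comp:
  assumes "src g = src f" "tgt k = src f"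
  shows "pair f g \<cdot> k = pair (f \<cdot> k) (g \<cdot> k)"
proof -
  have "pair f g \<cdot> k = pair ((in1 (tgt f) (tgt g))\<^sup>\<star> \<cdot> pair f g \<cdot> k) ((in2 (tgt f) (tgt g))\<^sup>\<star> \<cdot> pair f g \<cdot> k)"
    by (rule pair_eta) (use assms in simp)
  also have "\<dots> = pair (f \<cdot> k) (g \<cdot> k)"
    using assms by (simp add: comp_assoc[symmetric])
  finally show ?thesis .
qed

lemma comp_copair:
  assumes "tgt g = tgt f" "src h = tgt f"
  shows "h \<cdot> copair f g = copair (h \<cdot> f) (h \<cdot> g)"
proof -
  have "h \<cdot> copair f g
      = copair ((h \<cdot> copair f g) \<cdot> in1 (src f) (src g)) ((h \<cdot> copair f g) \<cdot> in2 (src f) (src g))"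
    by (rule copair_eta) (use assms in simp)
  also have "\<dots> = copair (h \<cdot> f) (h \<cdot> g)"
    using assms by (simp add: comp_assoc)
  finally show ?thesis .
qed

lemma add_zero_right [simp]:
  assumes "src f = X" "tgt f = Y"
  shows "f \<^bold>+ zero X Y = f"
proof -
  have "pair f (zero X Y) = pair ((in1 Y Y)\<^sup>\<star> \<cdot> in1 Y Y \<cdot> f) ((in2 Y Y)\<^sup>\<star> \<cdot> in1 Y Y \<cdot> f)"
    using assms by (simp add: comp_assoc[symmetric])
  also have "\<dots> = in1 Y Y \<cdot> f"
    by (rule pair_eta[symmetric]) (use assms in simp)
  finally show ?thesis
    unfolding add_def using assms by (simp add: comp_assoc[symmetric])
qed

lemma add_commute:
  assumes "src g = src f" "tgt g = tgt f"
  shows "g \<^bold>+ f = f \<^bold>+ g"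
proof -
  let ?Y = "tgt f"
  note B = biproduct_osum[of ?Y ?Y]
  show ?thesis
    using add_via_codiagonal[OF B, of f g] add_via_codiagonal[OF biproduct_swap[OF B], of g f] assms
      pairing_swap[of g f] copairing_swap[of "idt ?Y" "idt ?Y"]
    by simp
qed

lemma add_zero_left [simp]: "src f = X \<Longrightarrow> tgt f = Y \<Longrightarrow> zero X Y \<^bold>+ f = f"
  using add_commute[of "zero X Y" f] by simp

lemma add_comp:
  assumes "src g = src f" "tgt g = tgt f" "tgt k = src f"
  shows "(f \<^bold>+ g) \<cdot> k = f \<cdot> k \<^bold>+ g \<cdot> k"
  using assms unfolding add_def by (simp add: comp_assoc pair_comp)

lemma comp_add:
  assumes "src g = src f" "tgt g = tgt f" "src h = tgt f"
  shows "h \<cdot> (f \<^bold>+ g) = h \<cdot> f \<^bold>+ h \<cdot> g"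
  using assms by (simp add: add_eq_copair_diag comp_assoc[symmetric] comp_copair)

lemma pair_copair_interchange:
  assumes "src b = src a" "src c = src a" "src d = src a"
    and "tgt b = tgt a" "tgt c = tgt a" "tgt d = tgt a"
  shows "pair (copair a b) (copair c d) = copair (pair a c) (pair b d)"
proof -
  let ?X = "src a" and ?Y = "tgt a"
  let ?N = "pair (copair a b) (copair c d)"
  have "?N = copair (?N \<cdot> in1 ?X ?X) (?N \<cdot> in2 ?X ?X)"
    by (rule copair_eta) (use assms in simp)
  also have "?N \<cdot> in1 ?X ?X = pair a c"
    using assms by (simp add: pair_comp)
  also have "?N \<cdot> in2 ?X ?X = pair b d"
    using assms by (simp add: pair_comp)
  finally show ?thesis .
qed

lemma add_interchange:
  assumes "src b = src a" "src c = src a" "src d = src a"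
    and "tgt b = tgt a" "tgt c = tgt a" "tgt d = tgt a"
  shows "(a \<^bold>+ b) \<^bold>+ (c \<^bold>+ d) = (a \<^bold>+ c) \<^bold>+ (b \<^bold>+ d)"
proof -
  let ?X = "src a" and ?Y = "tgt a"
  have "a \<^bold>+ b = copair a b \<cdot> diag ?X" "c \<^bold>+ d = copair c d \<cdot> diag ?X"
    using assms by (simp_all add: add_eq_copair_diag)
  then have "(a \<^bold>+ b) \<^bold>+ (c \<^bold>+ d) = codiag ?Y \<cdot> pair (copair a b \<cdot> diag ?X) (copair c d \<cdot> diag ?X)"
    using assms unfolding add_def[of "a \<^bold>+ b"] by simp
  also have "\<dots> = codiag ?Y \<cdot> pair (copair a b) (copair c d) \<cdot> diag ?X"
    using assms by (simp add: pair_comp)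
  also have "\<dots> = codiag ?Y \<cdot> copair (pair a c) (pair b d) \<cdot> diag ?X"
    using assms by (simp add: pair_copair_interchange)
  also have "\<dots> = copair (a \<^bold>+ c) (b \<^bold>+ d) \<cdot> diag ?X"
    using assms by (simp add: comp_assoc[symmetric] comp_copair add_def)
  also have "\<dots> = (a \<^bold>+ c) \<^bold>+ (b \<^bold>+ d)"
    using assms by (simp add: add_eq_copair_diag)
  finally show ?thesis .
qed

lemma add_assoc:
  assumes "src b = src a" "tgt b = tgt a" "src c = src a" "tgt c = tgt a"
  shows "(a \<^bold>+ b) \<^bold>+ c = a \<^bold>+ (b \<^bold>+ c)"
  using add_interchange[of b a "zero (src a) (tgt a)" c] assms by simp

lemma adj_add:
  assumes "src g = src f" "tgt g = tgt f"
  shows "(f \<^bold>+ g)\<^sup>\<star> = f\<^sup>\<star> \<^bold>+ g\<^sup>\<star>"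
proof -
  have "(codiag (tgt f))\<^sup>\<star> = diag (tgt f)"
    using adj_diag[of "tgt f"] adj_adj by metis
  then have "(f \<^bold>+ g)\<^sup>\<star> = copair (f\<^sup>\<star>) (g\<^sup>\<star>) \<cdot> diag (tgt f)"
    using assms by (simp add: add_def adj_comp adj_pair)
  also have "\<dots> = f\<^sup>\<star> \<^bold>+ g\<^sup>\<star>"
    using assms by (simp add: add_eq_copair_diag)
  finally show ?thesis .
qed

subsection \<open>Additive inverses\<close>

lemma kernelD:
  assumes "kernel C f k"
  shows "tgt k = src f" "f \<cdot> k = zero (src k) (tgt f)"
    and "tgt h = src f \<Longrightarrow> f \<cdot> h = zero (src h) (tgt f) \<Longrightarrow>
      \<exists>u. src u = src h \<and> tgt u = src k \<and> k \<cdot> u = h"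
proof -
  show "tgt k = src f" using assms unfolding kernel_def by auto
  then show "f \<cdot> k = zero (src k) (tgt f)" using assms unfolding kernel_def is_zero_iff by auto
  assume "tgt h = src f" "f \<cdot> h = zero (src h) (tgt f)"
  moreover from this have "is_zero C (f \<cdot> h)" unfolding is_zero_iff by simp
  ultimately show "\<exists>u. src u = src h \<and> tgt u = src k \<and> k \<cdot> u = h"
    using assms unfolding kernel_def hom_def by metis
qed

lemma isometric_kernel_exists: "\<exists>k. kernel C f k \<and> isometry C k"
  using pre_hilbert_C unfolding pre_hilbert_def by blast

lemma diag_is_kernel: "\<exists>g. src g = osum X X \<and> kernel C g (diag X)"
proof -
  have "\<forall>X B s1 r1 s2 r2 d. ortho_biproduct C X X B s1 r1 s2 r2 \<and> hom C d X B \<and>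
      r1 \<cdot> d = idt X \<and> r2 \<cdot> d = idt X \<longrightarrow> (\<exists>g. src g = B \<and> kernel C g d)"
    using pre_hilbert_C unfolding pre_hilbert_def by blast
  then show ?thesis
    using ortho_biproduct_osum[of X X] diag[of X] unfolding hom_def by blast
qed

lemma codiag_comp_eq_add:
  assumes "tgt k = osum X X"
  shows "codiag X \<cdot> k = (in1 X X)\<^sup>\<star> \<cdot> k \<^bold>+ (in2 X X)\<^sup>\<star> \<cdot> k"
  using pair_eta[OF assms] assms unfolding add_def by simp

text \<open>The second identity is the only place where axiom (R4) is used.\<close>
lemma codiag_kernel_components:
  assumes k: "kernel C (codiag X) k" "isometry C k"
  defines "p \<equiv> (in1 X X)\<^sup>\<star> \<cdot> k" and "q \<equiv> (in2 X X)\<^sup>\<star> \<cdot> k"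
  shows "p \<^bold>+ q = zero (src k) X" and "p \<cdot> p\<^sup>\<star> = q \<cdot> p\<^sup>\<star> \<^bold>+ idt X"
proof -
  let ?K = "src k"
  note kk = kernelD[OF k(1)]
  have tgt_k: "tgt k = osum X X" using kk by simp
  have pq: "src p = ?K" "tgt p = X" "src q = ?K" "tgt q = X" using tgt_k by (auto simp: p_def q_def)
  show pq_zero: "p \<^bold>+ q = zero ?K X"
    using kk(2) codiag_comp_eq_add[OF tgt_k] by (simp add: p_def q_def)
  obtain g where g: "src g = osum X X" "kernel C g (diag X)"
    using diag_is_kernel by blast
  note gk = kernelD[OF g(2)]
  have "codiag X \<cdot> g\<^sup>\<star> = zero (tgt g) X"
    using adj_comp[of g "diag X"] gk g adj_diag by simp
  then obtain t where t: "src t = tgt g" "tgt t = ?K" "k \<cdot> t = g\<^sup>\<star>"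
    using kk(3)[of "g\<^sup>\<star>"] g by auto
  have g_eq: "g = t\<^sup>\<star> \<cdot> k\<^sup>\<star>"
    using adj_comp[of k t] t tgt_k by simp
  define h where "h = k \<cdot> p\<^sup>\<star> \<^bold>+ in2 X X"
  have h: "src h = X" "tgt h = osum X X" unfolding h_def using tgt_k pq by auto
  have "k\<^sup>\<star> \<cdot> h = p\<^sup>\<star> \<^bold>+ q\<^sup>\<star>"
    unfolding h_def using k(2) tgt_k pq adj_comp[of "(in2 X X)\<^sup>\<star>" k]
    by (simp add: comp_add comp_assoc[symmetric] isometry_def q_def)
  also have "\<dots> = zero X ?K"
    using adj_add[of q p] pq pq_zero by simp
  finally have "g \<cdot> h = zero X (tgt g)"
    using g_eq t h tgt_k by (simp add: comp_assoc)
  then obtain u where u: "src u = X" "tgt u = X" "diag X \<cdot> u = h"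
    using gk(3)[of h] h g by auto
  have "p \<cdot> p\<^sup>\<star> = (in1 X X)\<^sup>\<star> \<cdot> h"
    unfolding h_def using tgt_k pq by (simp add: comp_add comp_assoc p_def)
  also have "\<dots> = (in2 X X)\<^sup>\<star> \<cdot> h"
    unfolding u(3)[symmetric] using u(1,2) by (simp flip: comp_assoc)
  also have "\<dots> = q \<cdot> p\<^sup>\<star> \<^bold>+ idt X"
    unfolding h_def using tgt_k pq by (simp add: comp_add comp_assoc q_def)
  finally show "p \<cdot> p\<^sup>\<star> = q \<cdot> p\<^sup>\<star> \<^bold>+ idt X" .
qed

lemma exists_add_inverse_idt: "\<exists>n. src n = X \<and> tgt n = X \<and> idt X \<^bold>+ n = zero X X"
proof -
  obtain k where k: "kernel C (codiag X) k" "isometry C k"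
    using isometric_kernel_exists by blast
  define p where "p = (in1 X X)\<^sup>\<star> \<cdot> k"
  define q where "q = (in2 X X)\<^sup>\<star> \<cdot> k"
  note pq = codiag_kernel_components[OF k, folded p_def q_def]
  have "tgt k = osum X X" using kernelD(1)[OF k(1)] by simp
  then have dom: "src p = src k" "tgt p = X" "src q = src k" "tgt q = X"
    unfolding p_def q_def by auto
  have "idt X \<^bold>+ (q \<cdot> p\<^sup>\<star> \<^bold>+ q \<cdot> p\<^sup>\<star>) = (q \<cdot> p\<^sup>\<star> \<^bold>+ idt X) \<^bold>+ q \<cdot> p\<^sup>\<star>"
    using dom add_assoc[of "q \<cdot> p\<^sup>\<star>" "idt X" "q \<cdot> p\<^sup>\<star>"] add_commute[of "q \<cdot> p\<^sup>\<star>" "idt X"] by simp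
  also have "\<dots> = (p \<^bold>+ q) \<cdot> p\<^sup>\<star>"
    using dom pq(2) by (simp add: add_comp)
  also have "\<dots> = zero X X"
    using dom pq(1) by simp
  finally show ?thesis
    using dom by (intro exI[of _ "q \<cdot> p\<^sup>\<star> \<^bold>+ q \<cdot> p\<^sup>\<star>"]) simp
qed

definition neg_idt where "neg_idt X = (SOME n. src n = X \<and> tgt n = X \<and> idt X \<^bold>+ n = zero X X)"

definition neg ("\<^bold>- _" [81] 80) where "\<^bold>- f = neg_idt (tgt f) \<cdot> f"

lemma neg_idt: "src (neg_idt X) = X" "tgt (neg_idt X) = X" "idt X \<^bold>+ neg_idt X = zero X X"
  using someI_ex[OF exists_add_inverse_idt[of X]] unfolding neg_idt_def by auto

lemma src_neg [simp]: "src (\<^bold>- f) = src f" and tgt_neg [simp]: "tgt (\<^bold>- f) = tgt f"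
  unfolding neg_def using neg_idt by auto

lemma add_neg_right [simp]: "f \<^bold>+ \<^bold>- f = zero (src f) (tgt f)"
proof -
  have "f \<^bold>+ \<^bold>- f = (idt (tgt f) \<^bold>+ neg_idt (tgt f)) \<cdot> f"
    unfolding neg_def using neg_idt(1,2) by (simp add: add_comp)
  also have "\<dots> = zero (src f) (tgt f)"
    using neg_idt by simp
  finally show ?thesis .
qed

lemma add_neg_left [simp]: "\<^bold>- f \<^bold>+ f = zero (src f) (tgt f)"
  using add_commute[of "\<^bold>- f" f] by simp

lemma add_left_cancel:
  assumes "src b = src a" "tgt b = tgt a" "src c = src a" "tgt c = tgt a"
    and "a \<^bold>+ b = a \<^bold>+ c"
  shows "b = c"
proof -
  have "b = (\<^bold>- a \<^bold>+ a) \<^bold>+ b" using assms by simp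
  also have "\<dots> = \<^bold>- a \<^bold>+ (a \<^bold>+ c)" using add_assoc[of a "\<^bold>- a" b] assms by simp
  also have "\<dots> = (\<^bold>- a \<^bold>+ a) \<^bold>+ c" using add_assoc[of a "\<^bold>- a" c] assms by simp
  also have "\<dots> = c" using assms by simp
  finally show ?thesis .
qed

lemma neg_unique:
  assumes "src b = src a" "tgt b = tgt a" "a \<^bold>+ b = zero (src a) (tgt a)"
  shows "b = \<^bold>- a"
  using add_left_cancel[of b a "\<^bold>- a"] assms by simp

lemma eq_if_add_neg_eq_zero:
  assumes "src q = src p" "tgt q = tgt p" "p \<^bold>+ \<^bold>- q = zero (src p) (tgt p)"
  shows "p = q"
proof -
  have "p = p \<^bold>+ (\<^bold>- q \<^bold>+ q)" using assms by simp
  also have "\<dots> = (p \<^bold>+ \<^bold>- q) \<^bold>+ q" using add_assoc[of "\<^bold>- q" p q] assms by simp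
  finally show ?thesis using assms by simp
qed

lemma neg_comp: "tgt k = src f \<Longrightarrow> (\<^bold>- f) \<cdot> k = \<^bold>- (f \<cdot> k)"
  using neg_unique[of "(\<^bold>- f) \<cdot> k" "f \<cdot> k"] add_comp[of "\<^bold>- f" f k] by simp

lemma comp_neg: "src h = tgt f \<Longrightarrow> h \<cdot> \<^bold>- f = \<^bold>- (h \<cdot> f)"
  using neg_unique[of "h \<cdot> \<^bold>- f" "h \<cdot> f"] comp_add[of "\<^bold>- f" f h] by simp

lemma neg_zero [simp]: "\<^bold>- zero X Y = zero X Y"
  by (rule neg_unique[symmetric]) simp_all

lemma adj_neg: "(\<^bold>- f)\<^sup>\<star> = \<^bold>- (f\<^sup>\<star>)"
  using neg_unique[of "(\<^bold>- f)\<^sup>\<star>" "f\<^sup>\<star>"] adj_add[of "\<^bold>- f" f] by simp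

lemma add_add_neg_cancel:
  assumes "src b = src a" "tgt b = tgt a"
  shows "a \<^bold>+ (b \<^bold>+ \<^bold>- a) = b"
proof -
  have "a \<^bold>+ (b \<^bold>+ \<^bold>- a) = a \<^bold>+ (\<^bold>- a \<^bold>+ b)" using add_commute[of "\<^bold>- a" b] assms by simp
  also have "\<dots> = (a \<^bold>+ \<^bold>- a) \<^bold>+ b" using add_assoc[of "\<^bold>- a" a b] assms by simp
  finally show ?thesis using assms by simp
qed


subsection \<open>Contractions, codilations and the block matrix\<close>

lemma contractive_iff:
  "contractive C f \<longleftrightarrow> (\<exists>y. src y = src f \<and> f\<^sup>\<star> \<cdot> f \<^bold>+ y\<^sup>\<star> \<cdot> y = idt (src f))"
proof
  assume "contractive C f"
  then obtain c where c: "hom C c (src f) (src f)" "positive C c" "is_sum C (f\<^sup>\<star> \<cdot> f) c (idt (src f))"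
    unfolding contractive_def leq_def by auto
  then obtain y where y: "src y = src f" "c = y\<^sup>\<star> \<cdot> y"
    unfolding positive_def hom_def by auto
  have "f\<^sup>\<star> \<cdot> f \<^bold>+ y\<^sup>\<star> \<cdot> y = idt (src f)"
    using c(3) unfolding is_sum_iff y(2) by simp
  with y(1) show "\<exists>y. src y = src f \<and> f\<^sup>\<star> \<cdot> f \<^bold>+ y\<^sup>\<star> \<cdot> y = idt (src f)" by blast
next
  assume "\<exists>y. src y = src f \<and> f\<^sup>\<star> \<cdot> f \<^bold>+ y\<^sup>\<star> \<cdot> y = idt (src f)"
  then obtain y where y: "src y = src f" "f\<^sup>\<star> \<cdot> f \<^bold>+ y\<^sup>\<star> \<cdot> y = idt (src f)" by blast
  then have "hom C (y\<^sup>\<star> \<cdot> y) (src f) (src f)" "positive C (y\<^sup>\<star> \<cdot> y)"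
    "is_sum C (f\<^sup>\<star> \<cdot> f) (y\<^sup>\<star> \<cdot> y) (idt (src f))"
    unfolding hom_def positive_def is_sum_iff by auto
  then show "contractive C f"
    unfolding contractive_def leq_def by auto
qed

lemma copair_comp_pair:
  assumes "tgt b = tgt a" "src d = src c" "tgt c = src a" "tgt d = src b"
  shows "copair a b \<cdot> pair c d = a \<cdot> c \<^bold>+ b \<cdot> d"
proof -
  let ?X1 = "src a" and ?X2 = "src b"
  have "pair c d = pair ((in1 ?X1 ?X2)\<^sup>\<star> \<cdot> (in1 ?X1 ?X2 \<cdot> c \<^bold>+ in2 ?X1 ?X2 \<cdot> d))
      ((in2 ?X1 ?X2)\<^sup>\<star> \<cdot> (in1 ?X1 ?X2 \<cdot> c \<^bold>+ in2 ?X1 ?X2 \<cdot> d))"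
    using assms by (simp add: comp_add comp_assoc[symmetric])
  also have "\<dots> = in1 ?X1 ?X2 \<cdot> c \<^bold>+ in2 ?X1 ?X2 \<cdot> d"
    by (rule pair_eta[symmetric]) (use assms in simp)
  finally show ?thesis
    using assms by (simp add: comp_add comp_assoc[symmetric])
qed

lemma block_matrix_positive_imp_codilation:
  assumes "block_matrix_positive C f"
  shows "\<exists>T t1 t2. codilation C f T t1 t2"
proof -
  let ?X = "src f" and ?Y = "tgt f"
  let ?s1 = "in1 ?X ?Y" and ?s2 = "in2 ?X ?Y"
  define m where "m = copair (pair (idt ?X) f) (pair (f\<^sup>\<star>) (idt ?Y))"
  have m: "src m = osum ?X ?Y" "tgt m = osum ?X ?Y"
    "?s1\<^sup>\<star> \<cdot> m \<cdot> ?s1 = idt ?X" "?s1\<^sup>\<star> \<cdot> m \<cdot> ?s2 = f\<^sup>\<star>"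
    "?s2\<^sup>\<star> \<cdot> m \<cdot> ?s1 = f" "?s2\<^sup>\<star> \<cdot> m \<cdot> ?s2 = idt ?Y"
    unfolding m_def by simp_all
  then have "positive C m"
    using assms ortho_biproduct_osum[of ?X ?Y] unfolding block_matrix_positive_def hom_def by blast
  then obtain y where y: "src y = osum ?X ?Y" "m = y\<^sup>\<star> \<cdot> y"
    unfolding positive_def using m by auto
  have "codilation C f (tgt y) (y \<cdot> ?s1) (y \<cdot> ?s2)"
    unfolding codilation_def hom_def isometry_def using y m by (simp add: adj_comp_comp)
  then show ?thesis by blast
qed

lemma contractive_imp_block_matrix_positive:
  assumes "contractive C f"
  shows "block_matrix_positive C f"
  unfolding block_matrix_positive_def
proof (intro allI impI)
  let ?X = "src f" and ?Y = "tgt f"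
  fix B s1 r1 s2 r2 m
  assume "ortho_biproduct C ?X ?Y B s1 r1 s2 r2 \<and> hom C m B B \<and>
    r1 \<cdot> m \<cdot> s1 = idt ?X \<and> r1 \<cdot> m \<cdot> s2 = f\<^sup>\<star> \<and> r2 \<cdot> m \<cdot> s1 = f \<and> r2 \<cdot> m \<cdot> s2 = idt ?Y"
  then have B: "biproduct C ?X ?Y B s1 r1 s2 r2" and r: "r1 = s1\<^sup>\<star>" "r2 = s2\<^sup>\<star>"
    and m: "src m = B" "tgt m = B" and entries:
    "r1 \<cdot> m \<cdot> s1 = idt ?X" "r1 \<cdot> m \<cdot> s2 = f\<^sup>\<star>" "r2 \<cdot> m \<cdot> s1 = f" "r2 \<cdot> m \<cdot> s2 = idt ?Y"
    unfolding ortho_biproduct_def hom_def by auto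
  note b = biproductD[OF B]
  obtain y where y: "src y = ?X" "f\<^sup>\<star> \<cdot> f \<^bold>+ y\<^sup>\<star> \<cdot> y = idt ?X"
    using assms contractive_iff by blast
  let ?Z = "tgt y"
  define a where "a = pair f y"
  have a: "src a = ?X" "tgt a = osum ?Y ?Z" "(in1 ?Y ?Z)\<^sup>\<star> \<cdot> a = f" "a\<^sup>\<star> \<cdot> a = idt ?X"
    unfolding a_def using y by (simp_all add: adj_pair copair_comp_pair)
  define w where "w = copairing B s1 s2 a (in1 ?Y ?Z)"
  have w: "src w = B" "tgt w = osum ?Y ?Z" "w \<cdot> s1 = a" "w \<cdot> s2 = in1 ?Y ?Z"
    using copairing[OF B, of a "in1 ?Y ?Z"] a unfolding w_def by auto
  have a_in1: "a\<^sup>\<star> \<cdot> in1 ?Y ?Z = f\<^sup>\<star>"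
    using adj_comp[of "(in1 ?Y ?Z)\<^sup>\<star>" a] a by simp
  have "w\<^sup>\<star> \<cdot> w = m"
    by (rule biproduct_matrix_ext[OF B]) (use w m a a_in1 b entries in \<open>simp_all add: r adj_comp_comp[symmetric]\<close>)
  then show "positive C m"
    unfolding positive_def using w m by auto
qed

lemma isometry_complement_projection:
  assumes "isometry C t"
  defines "P \<equiv> idt (tgt t) \<^bold>+ \<^bold>- (t \<cdot> t\<^sup>\<star>)"
  shows "P\<^sup>\<star> \<cdot> P = P"
proof -
  let ?T = "tgt t"
  have tt: "t\<^sup>\<star> \<cdot> t = idt (src t)" using assms unfolding isometry_def by simp
  have e: "src (t \<cdot> t\<^sup>\<star>) = ?T" "tgt (t \<cdot> t\<^sup>\<star>) = ?T" "(t \<cdot> t\<^sup>\<star>)\<^sup>\<star> = t \<cdot> t\<^sup>\<star>"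
    by (simp_all add: adj_comp)
  have ee: "(t \<cdot> t\<^sup>\<star>) \<cdot> (t \<cdot> t\<^sup>\<star>) = t \<cdot> t\<^sup>\<star>"
    using comp_reassoc[OF tt] by (simp add: comp_assoc)
  have "P\<^sup>\<star> = P"
    unfolding P_def using e by (simp add: adj_add adj_neg)
  moreover have "(t \<cdot> t\<^sup>\<star>) \<cdot> P = zero ?T ?T"
    unfolding P_def using e ee by (simp add: comp_add comp_neg)
  ultimately show ?thesis
    unfolding P_def using e by (simp add: add_comp neg_comp)
qed

lemma codilation_imp_contractive:
  assumes "codilation C f T t1 t2"
  shows "contractive C f"
proof -
  let ?X = "src f"
  have t: "src t1 = ?X" "tgt t1 = T" "src t2 = tgt f" "tgt t2 = T"
    "isometry C t2" "t1\<^sup>\<star> \<cdot> t1 = idt ?X" "t2\<^sup>\<star> \<cdot> t1 = f"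
    using assms unfolding codilation_def hom_def isometry_def by auto
  then have "t1\<^sup>\<star> \<cdot> t2 = f\<^sup>\<star>" using adj_comp[of "t2\<^sup>\<star>" t1] by simp
  define P where "P = idt T \<^bold>+ \<^bold>- (t2 \<cdot> t2\<^sup>\<star>)"
  have P: "src P = T" "tgt P = T" "P\<^sup>\<star> \<cdot> P = P"
    unfolding P_def using isometry_complement_projection[OF t(5)] t by simp_all
  define y where "y = P \<cdot> t1"
  have "P \<cdot> t1 = t1 \<^bold>+ \<^bold>- (t2 \<cdot> f)"
    unfolding P_def using t by (simp add: add_comp neg_comp comp_assoc)
  have "y\<^sup>\<star> \<cdot> y = t1\<^sup>\<star> \<cdot> P \<cdot> t1"
    unfolding y_def using P t adj_comp[of P t1] comp_reassoc[OF P(3)] by (simp add: comp_assoc)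
  also have "\<dots> = t1\<^sup>\<star> \<cdot> (t1 \<^bold>+ \<^bold>- (t2 \<cdot> f))"
    by (simp add: \<open>P \<cdot> t1 = t1 \<^bold>+ \<^bold>- (t2 \<cdot> f)\<close>)
  also have "\<dots> = idt ?X \<^bold>+ \<^bold>- (f\<^sup>\<star> \<cdot> f)"
    using t \<open>t1\<^sup>\<star> \<cdot> t2 = f\<^sup>\<star>\<close> by (simp add: comp_add comp_neg comp_assoc[symmetric])
  finally have "f\<^sup>\<star> \<cdot> f \<^bold>+ y\<^sup>\<star> \<cdot> y = idt ?X"
    using add_add_neg_cancel[of "idt ?X" "f\<^sup>\<star> \<cdot> f"] by simp
  moreover have "src y = ?X" unfolding y_def using P t by simp
  ultimately show ?thesis using contractive_iff by blast
qed


lemma image_factorization: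
  obtains n i e where "kernel C (w\<^sup>\<star>) n" "isometry C n" "kernel C (n\<^sup>\<star>) i" "isometry C i"
    and "src e = src w" "tgt e = src i" "i \<cdot> e = w" "e\<^sup>\<star> \<cdot> e = w\<^sup>\<star> \<cdot> w"
proof -
  obtain n where n: "kernel C (w\<^sup>\<star>) n" "isometry C n"
    using isometric_kernel_exists by blast
  obtain i where i: "kernel C (n\<^sup>\<star>) i" "isometry C i"
    using isometric_kernel_exists by blast
  note nk = kernelD[OF n(1)] and ik = kernelD[OF i(1)]
  have "n\<^sup>\<star> \<cdot> w = zero (src w) (src n)"
    using adj_comp[of "w\<^sup>\<star>" n] nk by simp
  then obtain e where e: "src e = src w" "tgt e = src i" "i \<cdot> e = w"
    using ik(3)[of w] nk by auto
  have "e\<^sup>\<star> \<cdot> e = w\<^sup>\<star> \<cdot> w"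
    using i(2) e ik nk adj_comp[of i e] unfolding isometry_def
    by (metis comp_assoc comp_idt_left src_adj tgt_adj)
  with n i e show ?thesis by (rule that)
qed

text \<open>\<open>i\<close> is the image of \<open>w\<close> (the kernel of its cokernel \<open>n\<^sup>\<star>\<close>), and \<open>e\<close> is the corestriction
  of \<open>w\<close> to it.\<close>
lemma image_corestriction_epic:
  assumes n: "kernel C (w\<^sup>\<star>) n" "isometry C n" and i: "kernel C (n\<^sup>\<star>) i" "isometry C i"
    and e: "tgt e = src i" "i \<cdot> e = w"
    and pq: "src p = src i" "src q = src i" "tgt q = tgt p" "p \<cdot> e = q \<cdot> e"
  shows "p = q"
proof -
  note nk = kernelD[OF n(1)] and ik = kernelD[OF i(1)]
  have tgt_n: "tgt n = tgt w" and tgt_i: "tgt i = tgt w" using nk ik by simp_all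
  have nn: "n\<^sup>\<star> \<cdot> n = idt (src n)" and ii: "i\<^sup>\<star> \<cdot> i = idt (src i)"
    using n(2) i(2) unfolding isometry_def by simp_all
  define x where "x = p \<^bold>+ \<^bold>- q"
  have x: "src x = src i" "tgt x = tgt p" unfolding x_def using pq by simp_all
  have "x \<cdot> e = zero (src e) (tgt p)"
    unfolding x_def using pq e by (simp add: add_comp neg_comp)
  have "w\<^sup>\<star> \<cdot> (i \<cdot> x\<^sup>\<star>) = e\<^sup>\<star> \<cdot> (i\<^sup>\<star> \<cdot> i) \<cdot> x\<^sup>\<star>"
    using e x tgt_i adj_comp[of i e] by (simp add: comp_assoc)
  also have "\<dots> = (x \<cdot> e)\<^sup>\<star>"
    using ii x e adj_comp[of x e] by simp
  also have "\<dots> = zero (tgt p) (src w)"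
    using \<open>x \<cdot> e = zero (src e) (tgt p)\<close> e by auto
  finally have "w\<^sup>\<star> \<cdot> (i \<cdot> x\<^sup>\<star>) = zero (tgt p) (src w)" .
  then obtain h where h: "src h = tgt p" "tgt h = src n" "n \<cdot> h = i \<cdot> x\<^sup>\<star>"
    using nk(3)[of "i \<cdot> x\<^sup>\<star>"] tgt_i x by auto
  have "h = (n\<^sup>\<star> \<cdot> i) \<cdot> x\<^sup>\<star>"
    using comp_reassoc[OF nn, of h] h tgt_n tgt_i x by (simp add: comp_assoc)
  then have "i \<cdot> x\<^sup>\<star> = zero (tgt p) (tgt w)"
    using h ik tgt_n tgt_i x by simp
  then have "x\<^sup>\<star> = zero (tgt p) (src i)"
    using comp_reassoc[OF ii, of "x\<^sup>\<star>"] tgt_i x by simp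
  then have "x = zero (src p) (tgt p)"
    using x pq by (metis adj_adj adj_zero)
  then show ?thesis
    using eq_if_add_neg_eq_zero[of q p] pq unfolding x_def by simp
qed

lemma codilation_imp_jointly_epic_codilation:
  assumes "codilation C f T t1 t2"
  shows "\<exists>T t1 t2. codilation C f T t1 t2 \<and> jointly_epic C T t1 t2"
proof -
  let ?X = "src f" and ?Y = "tgt f"
  have t: "src t1 = ?X" "tgt t1 = T" "src t2 = ?Y" "tgt t2 = T"
    "t1\<^sup>\<star> \<cdot> t1 = idt ?X" "t2\<^sup>\<star> \<cdot> t2 = idt ?Y" "t2\<^sup>\<star> \<cdot> t1 = f"
    using assms unfolding codilation_def hom_def isometry_def by auto
  define w where "w = copair t1 t2"
  have w: "src w = osum ?X ?Y" "tgt w = T" "w \<cdot> in1 ?X ?Y = t1" "w \<cdot> in2 ?X ?Y = t2"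
    unfolding w_def using t by simp_all
  obtain n i e where n: "kernel C (w\<^sup>\<star>) n" "isometry C n" and i: "kernel C (n\<^sup>\<star>) i" "isometry C i"
    and e: "src e = osum ?X ?Y" "tgt e = src i" "i \<cdot> e = w" "e\<^sup>\<star> \<cdot> e = w\<^sup>\<star> \<cdot> w"
    using image_factorization[of w] w by metis
  have gram: "(e \<cdot> s)\<^sup>\<star> \<cdot> (e \<cdot> s') = (w \<cdot> s)\<^sup>\<star> \<cdot> (w \<cdot> s')"
    if "tgt s = osum ?X ?Y" "tgt s' = osum ?X ?Y" for s s'
    using that e w by (simp add: adj_comp_comp)
  have "codilation C f (src i) (e \<cdot> in1 ?X ?Y) (e \<cdot> in2 ?X ?Y)"
    unfolding codilation_def hom_def isometry_def using gram t w e by simp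
  moreover have "jointly_epic C (src i) (e \<cdot> in1 ?X ?Y) (e \<cdot> in2 ?X ?Y)"
    unfolding jointly_epic_def
  proof (intro allI impI)
    fix p q
    assume pq: "src p = src i \<and> src q = src i \<and> tgt p = tgt q \<and>
      p \<cdot> e \<cdot> in1 ?X ?Y = q \<cdot> e \<cdot> in1 ?X ?Y \<and> p \<cdot> e \<cdot> in2 ?X ?Y = q \<cdot> e \<cdot> in2 ?X ?Y"
    have "p \<cdot> e = q \<cdot> e"
      by (rule biproduct_jointly_epic[OF biproduct_osum[of ?X ?Y]])
        (use pq e in \<open>simp_all add: comp_assoc\<close>)
    then show "p = q"
      using image_corestriction_epic[OF n i e(2,3)] pq by simp
  qed
  ultimately show ?thesis by blast
qed

end

theorem proposition7p14:
  fixes C :: "('o, 'm) scat" and f :: 'm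
  assumes "pre_hilbert C"
  shows "(contractive C f \<longleftrightarrow> (\<exists>T t1 t2. codilation C f T t1 t2 \<and> jointly_epic C T t1 t2))
       \<and> (contractive C f \<longleftrightarrow> (\<exists>T t1 t2. codilation C f T t1 t2))
       \<and> (contractive C f \<longleftrightarrow> block_matrix_positive C f)"
proof -
  interpret pre_hilbert_cat C by unfold_locales (rule assms)
  have "contractive C f \<Longrightarrow> block_matrix_positive C f"
    by (rule contractive_imp_block_matrix_positive)
  moreover have "block_matrix_positive C f \<Longrightarrow> \<exists>T t1 t2. codilation C f T t1 t2"
    by (rule block_matrix_positive_imp_codilation)
  moreover have "codilation C f T t1 t2 \<Longrightarrow> contractive C f" for T t1 t2
    by (rule codilation_imp_contractive)
  moreover have "codilation C f T t1 t2 \<Longrightarrow>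
      \<exists>T t1 t2. codilation C f T t1 t2 \<and> jointly_epic C T t1 t2" for T t1 t2
    by (rule codilation_imp_jointly_epic_codilation)
  ultimately show ?thesis by blast
qed

end
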